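(* In the setting of the FedSLoP algorithm (see context), under Assumptions A1 and A2, for every round $t$ the aggregated update $\bar\Delta_t:=\frac1N\sum_{i=1}^N(\theta_{i,\tau}-\theta^t)$ satisfies $$\mathbb{E}_t\big[\|\bar\Delta_t\|^2\big]\le 2\eta^2S_\tau\Big(\underline{\delta}S_\tau\|\nabla f(\theta^t)\|^2+S_\tau\frac{\sigma_L^2}{N}+\frac{L^2}{1-\mu}D_t\Big).$$
   Context: Setting. Let $d,N,\tau$ be positive integers, $r$ an integer with $1\le r\le d$, $\underline{\delta}:=r/d\in(0,1]$, $\mu\in[0,1)$, $\eta>0$, $L>0$. Let $F_1,\dots,F_N:\mathbb{R}^d\to\mathbb{R}$ be differentiable and $f(\theta):=\frac1N\sum_{i=1}^N F_i(\theta)$. Assumption A1: $f$ is bounded below by $f_*>-\infty$, and $f$ and every $F_i$ are $L$-smooth (gradients $L$-Lipschitz). Assumption A2: each stochastic gradient $g_{i,s}=\nabla F_i(\theta_{i,s};\xi_{i,s})$ computed by the algorithm satisfies, conditionally on all randomness generated before it (including $\Pi_t$ and $\theta_{i,s}$), $\mathbb{E}[g_{i,s}]=\nabla F_i(\theta_{i,s})$ and $\mathbb{E}\|g_{i,s}-\nabla F_i(\theta_{i,s})\|^2\le\sigma_L^2$, the minibatch samples of different clients are conditionally independent; and $\|\nabla F_i(\theta)-\nabla f(\theta)\|^2\le\sigma_G^2$ for all $i$ and all $\theta\in\mathbb{R}^d$. Algorithm (FedSLoP, full participation). Start from $\theta^0\in\mathbb{R}^d$. In each round $t=0,1,\dots$: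 sample $P_t$ from the Haar (uniform, $O(d)$-invariant) distribution on $\mathrm{St}(d,r)=\{P\in\mathbb{R}^{d\times r}:P^\top P=I_r\}$, independently of all past randomness and of data sampling, and set $\Pi_t=P_tP_t^\top$. Each client $i=1,\dots,N$ sets $\theta_{i,0}=\theta^t$, $v_{i,0}=0$, and for $s=0,\dots,\tau-1$: $v_{i,s+1}=\mu v_{i,s}+\Pi_t g_{i,s}$, $\theta_{i,s+1}=\theta_{i,s}-\eta v_{i,s+1}$. The server sets $\theta^{t+1}=\theta^t+\frac1N\sum_{i=1}^N(\theta_{i,\tau}-\theta^t)$. Notation. $\mathbb{E}_t[\cdot]$ is the conditional expectation given $\theta^t$ and all randomness up to the start of round $t$ (so it averages over $\Pi_t$ and the round-$t$ minibatches). The drift is $D_t:=\frac1N\sum_{i=1}^N\sum_{s=0}^{\tau-1}\mathbb{E}_t\big[\|\theta_{i,s}-\theta^t\|^2\big]$. The momentum weights are $\alpha_{\tau,q}:=(1-\mu^{\tau-q})/(1-\mu)$ for $q=0,\dots,\tau-1$, and $S_\tau:=\sum_{q=0}^{\tau-1}\alpha_{\tau,q}$. *)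

theory Defs
  imports "HOL-Analysis.Analysis" "HOL-Probability.Probability"
begin

definition mom_alpha :: "real \<Rightarrow> nat \<Rightarrow> nat \<Rightarrow> real" where
  "mom_alpha \<mu> \<tau> q = (1 - \<mu> ^ (\<tau> - q)) / (1 - \<mu>)"

definition mom_S :: "real \<Rightarrow> nat \<Rightarrow> real" where
  "mom_S \<mu> \<tau> = (\<Sum>q<\<tau>. mom_alpha \<mu> \<tau> q)"

text \<open>Haar (uniform, O(d)-invariant) distribution on the Stiefel manifold St(d,r):
  P takes values in St(d,r) and its law is invariant under left multiplication
  by every orthogonal d x d matrix.  (This characterises the Haar law uniquely.)\<close>
definition haar_stiefel :: "'a measure \<Rightarrow> ('a \<Rightarrow> real^'r^'d) \<Rightarrow> bool" where
  "haar_stiefel M P \<longleftrightarrow>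
     P \<in> borel_measurable M \<and>
     (\<forall>\<omega>\<in>space M. transpose (P \<omega>) ** P \<omega> = mat 1) \<and>
     (\<forall>Q::real^'d^'d. orthogonal_matrix Q \<longrightarrow>
        distr M borel (\<lambda>\<omega>. Q ** P \<omega>) = distr M borel P)"

fun local_iter :: "real \<Rightarrow> real \<Rightarrow> real^'d \<Rightarrow> real^'d^'d \<Rightarrow> (nat \<Rightarrow> real^'d) \<Rightarrow> nat
                    \<Rightarrow> (real^'d) \<times> (real^'d)" where
  "local_iter \<eta> \<mu> th0 Proj gs 0 = (th0, 0)"
| "local_iter \<eta> \<mu> th0 Proj gs (Suc s) =
     (let (th, v) = local_iter \<eta> \<mu> th0 Proj gs s;
          v' = \<mu> *\<^sub>R v + Proj *v gs s
      in (th - \<eta> *\<^sub>R v', v'))"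

definition client_theta ::
  "real \<Rightarrow> real \<Rightarrow> real^'d \<Rightarrow> ('a \<Rightarrow> real^'r^'d) \<Rightarrow> (nat \<Rightarrow> nat \<Rightarrow> 'a \<Rightarrow> real^'d)
     \<Rightarrow> nat \<Rightarrow> nat \<Rightarrow> 'a \<Rightarrow> real^'d" where
  "client_theta \<eta> \<mu> th0 P g i s \<omega> =
     fst (local_iter \<eta> \<mu> th0 (P \<omega> ** transpose (P \<omega>)) (\<lambda>q. g i q \<omega>) s)"

definition past_sa ::
  "'a measure \<Rightarrow> nat \<Rightarrow> ('a \<Rightarrow> real^'r^'d) \<Rightarrow> (nat \<Rightarrow> nat \<Rightarrow> 'a \<Rightarrow> real^'d) \<Rightarrow> nat \<Rightarrow> 'a measure" where
  "past_sa M N P g s = sigma (space M)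
     ({P -` A \<inter> space M | A. A \<in> sets borel} \<union>
      {g j q -` A \<inter> space M | j q A. j < N \<and> q < s \<and> A \<in> sets borel})"

end

theory Submission
  imports Defs
begin

(*
  Unrolling the heavy-ball recursion writes the averaged update as
  -\<eta> \<Sum>_q alpha_q \<Pi> gbar_q, where gbar_q is the client average of the stochastic gradients
  at local step q and \<Pi> = P P^T is the random projection of the round, so a weighted
  Cauchy-Schwarz inequality reduces the claim to a bound on E|\<Pi> gbar_q|^2 for each q.
  Split gbar_q into Gbar_q, the average of the exact gradients at the local iterates (a
  function of the past), and the sampling noise ebar_q. The cross term vanishes by
  unbiasedness, and the noise of different clients is uncorrelated by conditional
  independence, so E|ebar_q|^2 <= sigma_L^2 / N. Moreover
  |\<Pi> Gbar_q|^2 <= 2 |\<Pi> grad f(theta)|^2 + 2 |Gbar_q - grad f(theta)|^2; the first term has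
  expectation (r/d) |grad f(theta)|^2 because the Haar law is rotation invariant, the second
  is at most L^2 times the average drift by smoothness. Summing up with alpha_q <= 1/(1-mu)
  gives the bound. If some drift has infinite expectation the right-hand side is infinite.
*)

lemma mom_alpha_Suc:
  assumes "\<mu> \<noteq> 1" "q < s"
  shows "mom_alpha \<mu> (Suc s) q = mom_alpha \<mu> s q + \<mu> ^ (s - q)"
proof -
  have "\<mu> ^ (Suc s - q) = \<mu> * \<mu> ^ (s - q)"
    using assms(2) by (simp add: Suc_diff_le)
  then show ?thesis
    using assms(1) unfolding mom_alpha_def by (simp add: field_simps)
qed

lemma mom_alpha_Suc_self: "\<mu> \<noteq> 1 \<Longrightarrow> mom_alpha \<mu> (Suc s) s = 1"
  unfolding mom_alpha_def by simp

lemma mom_alpha_nonneg: "0 \<le> \<mu> \<Longrightarrow> \<mu> < 1 \<Longrightarrow> 0 \<le> mom_alpha \<mu> t q"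
  unfolding mom_alpha_def by (intro divide_nonneg_pos) (auto simp: power_le_one)

lemma mom_alpha_le: "0 \<le> \<mu> \<Longrightarrow> \<mu> < 1 \<Longrightarrow> mom_alpha \<mu> t q \<le> 1 / (1 - \<mu>)"
  unfolding mom_alpha_def by (intro divide_right_mono) auto

lemma mom_S_pos:
  assumes "0 \<le> \<mu>" "\<mu> < 1" "0 < t"
  shows "0 < mom_S \<mu> t"
proof -
  have "mom_alpha \<mu> t (t - 1) = 1"
    using assms unfolding mom_alpha_def by simp
  moreover have "mom_alpha \<mu> t (t - 1) \<le> mom_S \<mu> t"
    unfolding mom_S_def using assms by (intro member_le_sum mom_alpha_nonneg) auto
  ultimately show ?thesis by simp
qed

lemma local_iter_eq:
  assumes "\<mu> \<noteq> 1"
  shows "local_iter \<eta> \<mu> th0 Pr gs s =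
    (th0 - \<eta> *\<^sub>R (\<Sum>q<s. mom_alpha \<mu> s q *\<^sub>R (Pr *v gs q)),
     (\<Sum>q<s. \<mu> ^ (s - 1 - q) *\<^sub>R (Pr *v gs q)))"
proof (induction s)
  case 0
  then show ?case by simp
next
  case (Suc s)
  have "\<mu> *\<^sub>R (\<Sum>q<s. \<mu> ^ (s - 1 - q) *\<^sub>R (Pr *v gs q)) = (\<Sum>q<s. \<mu> ^ (s - q) *\<^sub>R (Pr *v gs q))"
    unfolding scaleR_sum_right by (intro sum.cong) (auto simp: Suc_diff_Suc simp flip: power_Suc)
  then have v: "\<mu> *\<^sub>R (\<Sum>q<s. \<mu> ^ (s - 1 - q) *\<^sub>R (Pr *v gs q)) + Pr *v gs s
      = (\<Sum>q<Suc s. \<mu> ^ (Suc s - 1 - q) *\<^sub>R (Pr *v gs q))"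
    by simp
  have "(\<Sum>q<s. mom_alpha \<mu> (Suc s) q *\<^sub>R (Pr *v gs q))
      = (\<Sum>q<s. mom_alpha \<mu> s q *\<^sub>R (Pr *v gs q)) + (\<Sum>q<s. \<mu> ^ (s - q) *\<^sub>R (Pr *v gs q))"
    unfolding sum.distrib[symmetric]
    by (rule sum.cong) (auto simp: mom_alpha_Suc[OF assms] scaleR_add_left)
  then have "(\<Sum>q<Suc s. mom_alpha \<mu> (Suc s) q *\<^sub>R (Pr *v gs q))
      = (\<Sum>q<s. mom_alpha \<mu> s q *\<^sub>R (Pr *v gs q)) + (\<Sum>q<s. \<mu> ^ (s - q) *\<^sub>R (Pr *v gs q)) + Pr *v gs s"
    by (simp add: mom_alpha_Suc_self[OF assms])
  with v have "(\<Sum>q<s. mom_alpha \<mu> s q *\<^sub>R (Pr *v gs q))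
      + (\<mu> *\<^sub>R (\<Sum>q<s. \<mu> ^ (s - 1 - q) *\<^sub>R (Pr *v gs q)) + Pr *v gs s)
      = (\<Sum>q<Suc s. mom_alpha \<mu> (Suc s) q *\<^sub>R (Pr *v gs q))"
    by (simp add: algebra_simps)
  then show ?case
    using Suc v by (simp add: Let_def algebra_simps flip: scaleR_add_right)
qed

lemma norm_sum_scaleR_sq_le:
  fixes x :: "'b \<Rightarrow> 'c::real_normed_vector"
  assumes "finite A" "\<And>q. q \<in> A \<Longrightarrow> 0 \<le> a q"
  shows "(norm (\<Sum>q\<in>A. a q *\<^sub>R x q))\<^sup>2 \<le> (\<Sum>q\<in>A. a q) * (\<Sum>q\<in>A. a q * (norm (x q))\<^sup>2)"
proof -
  have "norm (\<Sum>q\<in>A. a q *\<^sub>R x q) \<le> (\<Sum>q\<in>A. sqrt (a q) * (sqrt (a q) * norm (x q)))"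
    using norm_sum[of "\<lambda>q. a q *\<^sub>R x q" A] assms
    by (simp add: abs_of_nonneg real_sqrt_mult_self flip: mult.assoc)
  then have "(norm (\<Sum>q\<in>A. a q *\<^sub>R x q))\<^sup>2 \<le> (\<Sum>q\<in>A. sqrt (a q) * (sqrt (a q) * norm (x q)))\<^sup>2"
    by (simp add: power_mono)
  also have "\<dots> \<le> (\<Sum>q\<in>A. (sqrt (a q))\<^sup>2) * (\<Sum>q\<in>A. (sqrt (a q) * norm (x q))\<^sup>2)"
    by (rule Cauchy_Schwarz_ineq_sum)
  also have "\<dots> = (\<Sum>q\<in>A. a q) * (\<Sum>q\<in>A. a q * (norm (x q))\<^sup>2)"
    using assms by (simp add: power_mult_distrib)
  finally show ?thesis .
qed

lemma norm_average_sq_le: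
  fixes x :: "nat \<Rightarrow> 'c::real_normed_vector"
  assumes "0 < N"
  shows "(norm ((1 / real N) *\<^sub>R (\<Sum>i<N. x i)))\<^sup>2 \<le> (1 / real N) * (\<Sum>i<N. (norm (x i))\<^sup>2)"
  using norm_sum_scaleR_sq_le[of "{..<N}" "\<lambda>_. 1 / real N" x] assms
  by (simp add: scaleR_sum_right sum_divide_distrib)

lemma norm_add_sq_le: "(norm (a + b :: 'c::real_normed_vector))\<^sup>2 \<le> 2 * (norm a)\<^sup>2 + 2 * (norm b)\<^sup>2"
proof -
  have "(norm (a + b))\<^sup>2 \<le> (norm a + norm b)\<^sup>2"
    by (simp add: power_mono norm_triangle_ineq)
  also have "\<dots> \<le> 2 * (norm a)\<^sup>2 + 2 * (norm b)\<^sup>2"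
    using sum_squares_bound[of "norm a" "norm b"] by (simp add: power2_sum)
  finally show ?thesis .
qed

lemma power2_norm_sum:
  fixes x :: "'b \<Rightarrow> 'c::real_inner"
  shows "(norm (\<Sum>i\<in>A. x i))\<^sup>2 = (\<Sum>i\<in>A. \<Sum>j\<in>A. x i \<bullet> x j)"
  by (simp only: power2_norm_eq_inner inner_sum_left inner_sum_right)
    (subst sum.swap, simp add: inner_commute)

lemma norm_add_sq_eq: "(norm (a + b :: 'c::real_inner))\<^sup>2 = (norm a)\<^sup>2 + 2 * (a \<bullet> b) + (norm b)\<^sup>2"
  by (simp add: power2_norm_eq_inner inner_add_left inner_add_right inner_commute)

lemma gradient_of_average:
  fixes F :: "nat \<Rightarrow> 'a::real_inner \<Rightarrow> real"
  assumes "\<And>x. f x = (1 / real N) * (\<Sum>i<N. F i x)"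
    and "\<And>i. i < N \<Longrightarrow> (F i has_derivative (\<lambda>h. gradF i x \<bullet> h)) (at x)"
    and "(f has_derivative (\<lambda>h. gradf \<bullet> h)) (at x)"
  shows "gradf = (1 / real N) *\<^sub>R (\<Sum>i<N. gradF i x)"
proof -
  define v where "v = (1 / real N) *\<^sub>R (\<Sum>i<N. gradF i x)"
  have "((\<lambda>x. (1 / real N) * (\<Sum>i<N. F i x)) has_derivative (\<lambda>h. (1 / real N) * (\<Sum>i<N. gradF i x \<bullet> h))) (at x)"
    by (intro has_derivative_mult_right has_derivative_sum assms(2)) auto
  moreover have "f = (\<lambda>x. (1 / real N) * (\<Sum>i<N. F i x))"
    using assms(1) by blast
  ultimately have "(f has_derivative (\<lambda>h. v \<bullet> h)) (at x)"
    by (simp add: v_def inner_sum_left)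
  then have "(\<lambda>h. gradf \<bullet> h) = (\<lambda>h. v \<bullet> h)"
    by (rule has_derivative_unique[OF assms(3)])
  then have "(gradf - v) \<bullet> (gradf - v) = 0"
    by (metis inner_diff_left right_minus_eq)
  then show ?thesis unfolding v_def by simp
qed

declare transpose_matrix_vector [simp del]

lemma inner_matrix_vector_transpose:
  fixes A :: "real^'n^'m"
  shows "(A *v x) \<bullet> y = x \<bullet> (transpose A *v y)"
  by (metis dot_lmul_matrix inner_commute transpose_matrix_vector transpose_transpose)

lemma norm_vec_sq: "(norm (v::real^'n))\<^sup>2 = (\<Sum>j\<in>UNIV. (v $ j)\<^sup>2)"
  unfolding power2_norm_eq_inner inner_vec_def by (simp add: power2_eq_square)

context
  fixes P :: "real^'r^'d"
  assumes stiefel: "transpose P ** P = mat 1"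
begin

lemma norm_stiefel_mult: "norm (P *v y) = norm y"
proof -
  have "(P *v y) \<bullet> (P *v y) = y \<bullet> y"
    by (simp add: inner_matrix_vector_transpose matrix_vector_mul_assoc stiefel)
  then show ?thesis by (simp add: norm_eq_sqrt_inner)
qed

lemma norm_stiefel_proj: "norm ((P ** transpose P) *v z) = norm (transpose P *v z)"
  by (simp add: norm_stiefel_mult flip: matrix_vector_mul_assoc)

lemma norm_transpose_stiefel_le: "norm (transpose P *v z) \<le> norm z"
proof -
  have "(norm (transpose P *v z))\<^sup>2 = z \<bullet> (P *v (transpose P *v z))"
    by (metis power2_norm_eq_inner inner_matrix_vector_transpose inner_commute transpose_transpose)
  also have "\<dots> \<le> norm z * norm (P *v (transpose P *v z))"
    by (rule norm_cauchy_schwarz)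
  also have "\<dots> = norm z * norm (transpose P *v z)"
    by (simp add: norm_stiefel_mult)
  finally show ?thesis
    by (metis mult_right_le_imp_le norm_ge_zero power2_eq_square mult_zero_right order_le_less)
qed

lemma norm_stiefel_proj_le: "norm ((P ** transpose P) *v z) \<le> norm z"
  using norm_stiefel_proj norm_transpose_stiefel_le by simp

lemma inner_stiefel_proj_proj:
  "((P ** transpose P) *v a) \<bullet> ((P ** transpose P) *v b) = ((P ** transpose P) *v a) \<bullet> b"
proof -
  have "((P ** transpose P) *v a) \<bullet> ((P ** transpose P) *v b)
      = (transpose P *v a) \<bullet> (transpose P *v (P *v (transpose P *v b)))"
    by (simp add: inner_matrix_vector_transpose flip: matrix_vector_mul_assoc)
  also have "\<dots> = (transpose P *v a) \<bullet> (transpose P *v b)"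
    by (metis matrix_vector_mul_assoc stiefel matrix_vector_mul_lid)
  also have "\<dots> = ((P ** transpose P) *v a) \<bullet> b"
    by (simp add: inner_matrix_vector_transpose flip: matrix_vector_mul_assoc)
  finally show ?thesis .
qed

lemma sum_norm_transpose_stiefel_axis_sq: "(\<Sum>k\<in>UNIV. (norm (transpose P *v axis k 1))\<^sup>2) = real CARD('r)"
proof -
  have "transpose P *v axis k 1 = (\<chi> j. P $ k $ j)" for k
    by (simp add: vec_eq_iff matrix_vector_mult_def transpose_def axis_def if_distrib cong: if_cong)
  then have "(\<Sum>k\<in>UNIV. (norm (transpose P *v axis k 1))\<^sup>2) = (\<Sum>k\<in>UNIV. \<Sum>j\<in>UNIV. (P $ k $ j)\<^sup>2)"
    by (simp add: norm_vec_sq)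
  also have "\<dots> = (\<Sum>j\<in>UNIV. (transpose P ** P) $ j $ j)"
    by (subst sum.swap) (simp add: matrix_matrix_mult_def transpose_def power2_eq_square)
  also have "\<dots> = real CARD('r)"
    by (simp add: stiefel mat_def)
  finally show ?thesis .
qed

end

lemma borel_measurable_vec_nth [measurable (raw)]:
  fixes f :: "'a \<Rightarrow> 'b::real_normed_vector^'n"
  assumes "f \<in> borel_measurable M"
  shows "(\<lambda>x. f x $ i) \<in> borel_measurable M"
  using borel_measurable_continuous_on[OF linear_continuous_on[OF bounded_linear_vec_nth] assms] .

lemma borel_measurable_vecI:
  fixes f :: "'a \<Rightarrow> 'b::euclidean_space^'n"
  assumes "\<And>i. (\<lambda>x. f x $ i) \<in> borel_measurable M"
  shows "f \<in> borel_measurable M"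
proof (subst borel_measurable_euclidean_space, intro ballI)
  fix b :: "'b^'n" assume "b \<in> Basis"
  then obtain i u where "b = axis i u" by (auto simp: Basis_vec_def)
  then show "(\<lambda>x. f x \<bullet> b) \<in> borel_measurable M"
    using assms[of i] by (simp add: inner_axis)
qed

lemma borel_measurable_matrix_vector_mult [measurable (raw)]:
  fixes A :: "'a \<Rightarrow> real^'n^'m"
  assumes [measurable]: "A \<in> borel_measurable M" "x \<in> borel_measurable M"
  shows "(\<lambda>w. A w *v x w) \<in> borel_measurable M"
  by (rule borel_measurable_vecI, unfold matrix_vector_mult_def vec_lambda_beta) measurable

lemma borel_measurable_matrix_matrix_mult [measurable (raw)]:
  fixes A :: "'a \<Rightarrow> real^'n^'m" and B :: "'a \<Rightarrow> real^'k^'n"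
  assumes [measurable]: "A \<in> borel_measurable M" "B \<in> borel_measurable M"
  shows "(\<lambda>w. A w ** B w) \<in> borel_measurable M"
  by (intro borel_measurable_vecI, unfold matrix_matrix_mult_def vec_lambda_beta) measurable

lemma borel_measurable_transpose [measurable (raw)]:
  fixes A :: "'a \<Rightarrow> real^'n^'m"
  assumes [measurable]: "A \<in> borel_measurable M"
  shows "(\<lambda>w. transpose (A w)) \<in> borel_measurable M"
  by (intro borel_measurable_vecI, unfold transpose_def vec_lambda_beta) measurable

lemma measurable_sigma_generator:
  assumes "G \<subseteq> Pow \<Omega>" "\<And>A. A \<in> sets borel \<Longrightarrow> f -` A \<inter> \<Omega> \<in> G"
  shows "f \<in> borel_measurable (sigma \<Omega> G)"
proof (rule measurableI)
  fix A :: "'b set" assume "A \<in> sets borel"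
  then show "f -` A \<inter> space (sigma \<Omega> G) \<in> sets (sigma \<Omega> G)"
    using assms by (simp add: sets_measure_of space_measure_of_conv sigma_sets.Basic)
qed simp

context
  fixes M :: "'a measure" and P :: "'a \<Rightarrow> real^'r^'d"
  assumes prob: "prob_space M" and haar: "haar_stiefel M P"
begin

lemma haar_stiefel_meas: "P \<in> borel_measurable M"
  and haar_stiefel_orthonormal: "\<omega> \<in> space M \<Longrightarrow> transpose (P \<omega>) ** P \<omega> = mat 1"
  using haar unfolding haar_stiefel_def by auto

lemma haar_stiefel_integrable_sq: "integrable M (\<lambda>\<omega>. (norm (transpose (P \<omega>) *v u))\<^sup>2)"
proof -
  interpret prob_space M by (rule prob)
  have "AE \<omega> in M. norm ((norm (transpose (P \<omega>) *v u))\<^sup>2) \<le> (norm u)\<^sup>2"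
    using norm_transpose_stiefel_le[OF haar_stiefel_orthonormal] by (auto intro!: AE_I2 power_mono)
  then show ?thesis
    by (rule integrable_const_bound) (use haar_stiefel_meas in measurable)
qed

lemma haar_stiefel_second_moment_rotation:
  assumes "orthogonal_matrix Q"
  shows "(\<integral>\<omega>. (norm (transpose (P \<omega>) *v (transpose Q *v u)))\<^sup>2 \<partial>M)
    = (\<integral>\<omega>. (norm (transpose (P \<omega>) *v u))\<^sup>2 \<partial>M)"
proof -
  have [measurable]: "P \<in> borel_measurable M"
    "(\<lambda>A::real^'r^'d. (norm (transpose A *v u))\<^sup>2) \<in> borel_measurable borel"
    using haar_stiefel_meas by measurable
  have "(\<integral>\<omega>. (norm (transpose (P \<omega>) *v u))\<^sup>2 \<partial>M)
      = integral\<^sup>L (distr M borel P) (\<lambda>A. (norm (transpose A *v u))\<^sup>2)"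
    by (subst integral_distr) auto
  also have "\<dots> = integral\<^sup>L (distr M borel (\<lambda>\<omega>. Q ** P \<omega>)) (\<lambda>A. (norm (transpose A *v u))\<^sup>2)"
    using haar assms unfolding haar_stiefel_def by simp
  also have "\<dots> = (\<integral>\<omega>. (norm (transpose (P \<omega>) *v (transpose Q *v u)))\<^sup>2 \<partial>M)"
    by (subst integral_distr) (auto simp: matrix_transpose_mul simp flip: matrix_vector_mul_assoc)
  finally show ?thesis by simp
qed

lemma haar_stiefel_second_moment_norm_eq:
  assumes "norm u = norm v"
  shows "(\<integral>\<omega>. (norm (transpose (P \<omega>) *v u))\<^sup>2 \<partial>M) = (\<integral>\<omega>. (norm (transpose (P \<omega>) *v v))\<^sup>2 \<partial>M)"
proof -
  obtain f where f: "orthogonal_transformation f" "f u = v"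
    using orthogonal_transformation_exists[OF assms] by blast
  then have "orthogonal_matrix (transpose (matrix f))"
    by (simp add: orthogonal_transformation_matrix orthogonal_matrix_transpose)
  from haar_stiefel_second_moment_rotation[OF this, of u] f show ?thesis
    by (simp add: orthogonal_transformation_linear)
qed

text \<open>By rotation invariance the second moment is a multiple of \<open>\<parallel>x\<parallel>\<^sup>2\<close>; summing it over the
  standard basis gives the squared Frobenius norm \<open>r\<close> of \<open>P\<close>, which fixes the multiple.\<close>
lemma haar_stiefel_second_moment:
  "(\<integral>\<omega>. (norm (transpose (P \<omega>) *v x))\<^sup>2 \<partial>M) = real CARD('r) / real CARD('d) * (norm x)\<^sup>2"
proof -
  define \<phi> where "\<phi> u = (\<integral>\<omega>. (norm (transpose (P \<omega>) *v u))\<^sup>2 \<partial>M)" for u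
  obtain k0 :: 'd where True by simp
  have "real CARD('d) * \<phi> (axis k0 1) = (\<Sum>k\<in>(UNIV::'d set). \<phi> (axis k0 1))"
    by simp
  also have "\<dots> = (\<Sum>k\<in>UNIV. \<phi> (axis k 1))"
    unfolding \<phi>_def by (intro sum.cong refl haar_stiefel_second_moment_norm_eq) simp
  also have "\<dots> = (\<integral>\<omega>. (\<Sum>k\<in>UNIV. (norm (transpose (P \<omega>) *v axis k 1))\<^sup>2) \<partial>M)"
    unfolding \<phi>_def by (subst Bochner_Integration.integral_sum) (auto intro: haar_stiefel_integrable_sq)
  also have "\<dots> = real CARD('r)"
    by (subst Bochner_Integration.integral_cong[OF refl
          sum_norm_transpose_stiefel_axis_sq[OF haar_stiefel_orthonormal]])
      (auto simp: prob_space.prob_space[OF prob])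
  finally have "\<phi> (axis k0 1) = real CARD('r) / real CARD('d)"
    by (simp add: field_simps)
  moreover have "\<phi> x = (norm x)\<^sup>2 * \<phi> (axis k0 1)"
    using haar_stiefel_second_moment_norm_eq[of x "norm x *\<^sub>R axis k0 1"]
    by (simp add: \<phi>_def matrix_vector_mult_scaleR power_mult_distrib)
  ultimately show ?thesis
    unfolding \<phi>_def by simp
qed

end

lemma integrable_mult_of_square_integrable:
  fixes a b :: "'a \<Rightarrow> real"
  assumes [measurable]: "a \<in> borel_measurable M" "b \<in> borel_measurable M"
    and "integrable M (\<lambda>w. (a w)\<^sup>2)" "integrable M (\<lambda>w. (b w)\<^sup>2)"
  shows "integrable M (\<lambda>w. a w * b w)"
proof (rule Bochner_Integration.integrable_bound[OF Bochner_Integration.integrable_add[OF assms(3,4)]])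
  show "AE w in M. norm (a w * b w) \<le> norm ((a w)\<^sup>2 + (b w)\<^sup>2)"
  proof (rule AE_I2)
    fix w
    have "2 * \<bar>a w\<bar> * \<bar>b w\<bar> \<le> (a w)\<^sup>2 + (b w)\<^sup>2"
      using sum_squares_bound[of "\<bar>a w\<bar>" "\<bar>b w\<bar>"] by simp
    then have "\<bar>a w\<bar> * \<bar>b w\<bar> \<le> (a w)\<^sup>2 + (b w)\<^sup>2"
      using zero_le_mult_iff[of "\<bar>a w\<bar>" "\<bar>b w\<bar>"] by linarith
    then show "norm (a w * b w) \<le> norm ((a w)\<^sup>2 + (b w)\<^sup>2)"
      by (simp add: abs_mult)
  qed
qed measurable

lemma integrable_mult_bounded:
  fixes Z W :: "'a \<Rightarrow> real"
  assumes "integrable M Z" "W \<in> borel_measurable M" "AE x in M. \<bar>W x\<bar> \<le> b"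
  shows "integrable M (\<lambda>x. Z x * W x)"
proof (rule Bochner_Integration.integrable_bound[where f="\<lambda>x. \<bar>b\<bar> * \<bar>Z x\<bar>"])
  show "AE x in M. norm (Z x * W x) \<le> norm (\<bar>b\<bar> * \<bar>Z x\<bar>)"
    using assms(3)
  proof eventually_elim
    case (elim x)
    then have "\<bar>Z x\<bar> * \<bar>W x\<bar> \<le> \<bar>Z x\<bar> * \<bar>b\<bar>"
      by (intro mult_left_mono) auto
    then show ?case
      by (simp add: abs_mult mult.commute)
  qed
qed (use assms in auto)

lemma integrable_norm_sq_le:
  fixes X :: "'a \<Rightarrow> 'c::real_normed_vector"
  assumes "integrable M f" "X \<in> borel_measurable M" "\<And>w. w \<in> space M \<Longrightarrow> (norm (X w))\<^sup>2 \<le> f w"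
  shows "integrable M (\<lambda>w. (norm (X w))\<^sup>2)"
proof (rule Bochner_Integration.integrable_bound[OF assms(1)])
  show "AE w in M. norm ((norm (X w))\<^sup>2) \<le> norm (f w)"
    using assms(3) by (intro AE_I2) (force intro: order_trans[OF _ abs_ge_self])
qed (use assms(2) in measurable)

lemma integrable_vec_nth_sq:
  fixes X :: "'a \<Rightarrow> real^'n"
  assumes "X \<in> borel_measurable M" "integrable M (\<lambda>w. (norm (X w))\<^sup>2)"
  shows "integrable M (\<lambda>w. (X w $ k)\<^sup>2)"
proof (rule Bochner_Integration.integrable_bound[OF assms(2)])
  show "AE w in M. norm ((X w $ k)\<^sup>2) \<le> norm ((norm (X w))\<^sup>2)"
    using power_mono[OF component_le_norm_cart abs_ge_zero, of "X _" k 2] by simp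
qed (use assms(1) in measurable)

lemma integrable_inner_vec:
  fixes X Y :: "'a \<Rightarrow> real^'n"
  assumes [measurable]: "X \<in> borel_measurable M" "Y \<in> borel_measurable M"
    and "integrable M (\<lambda>w. (norm (X w))\<^sup>2)" "integrable M (\<lambda>w. (norm (Y w))\<^sup>2)"
  shows "integrable M (\<lambda>w. X w \<bullet> Y w)"
    and "(\<integral>w. X w \<bullet> Y w \<partial>M) = (\<Sum>k\<in>UNIV. \<integral>w. X w $ k * Y w $ k \<partial>M)"
proof -
  have "integrable M (\<lambda>w. X w $ k * Y w $ k)" for k
    by (intro integrable_mult_of_square_integrable integrable_vec_nth_sq) (auto simp: assms)
  then show "integrable M (\<lambda>w. X w \<bullet> Y w)"
    and "(\<integral>w. X w \<bullet> Y w \<partial>M) = (\<Sum>k\<in>UNIV. \<integral>w. X w $ k * Y w $ k \<partial>M)"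
    by (simp_all add: inner_vec_def)
qed

definition trunc :: "real \<Rightarrow> real \<Rightarrow> real" where
  "trunc c x = max (- c) (min c x)"

lemma abs_trunc_le_bound: "0 \<le> c \<Longrightarrow> \<bar>trunc c x\<bar> \<le> c"
  unfolding trunc_def by auto

lemma abs_trunc_le: "0 \<le> c \<Longrightarrow> \<bar>trunc c x\<bar> \<le> \<bar>x\<bar>"
  unfolding trunc_def by auto

lemma trunc_tendsto: "(\<lambda>n. trunc (real n) x) \<longlonglongrightarrow> x"
proof (rule tendsto_eventually)
  obtain n0 :: nat where "\<bar>x\<bar> \<le> real n0" using real_arch_simple by blast
  then show "eventually (\<lambda>n. trunc (real n) x = x) sequentially"
    unfolding eventually_sequentially trunc_def by (intro exI[of _ n0]) auto
qed

lemma borel_measurable_trunc [measurable]: "trunc c \<in> borel_measurable borel"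
  unfolding trunc_def by (intro borel_measurable_continuous_onI continuous_intros)

lemma integral_trunc_mult_tendsto:
  fixes X Y :: "'a \<Rightarrow> real"
  assumes [measurable]: "X \<in> borel_measurable M" "Y \<in> borel_measurable M"
    and "integrable M (\<lambda>w. X w * Y w)"
  shows "(\<lambda>n. \<integral>w. trunc (real n) (X w) * Y w \<partial>M) \<longlonglongrightarrow> (\<integral>w. X w * Y w \<partial>M)"
proof (rule integral_dominated_convergence[where w="\<lambda>w. \<bar>X w * Y w\<bar>"])
  show "AE w in M. (\<lambda>n. trunc (real n) (X w) * Y w) \<longlonglongrightarrow> X w * Y w"
    by (intro AE_I2 tendsto_mult trunc_tendsto tendsto_const)
  show "AE w in M. norm (trunc (real n) (X w) * Y w) \<le> \<bar>X w * Y w\<bar>" for n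
    by (intro AE_I2) (auto simp: abs_mult intro!: mult_right_mono abs_trunc_le)
qed (use assms(3) in auto)

lemma (in sigma_finite_subalgebra) integral_mult_cond_exp_AE:
  fixes f g h :: "'a \<Rightarrow> real"
  assumes [measurable]: "f \<in> borel_measurable F" "g \<in> borel_measurable M" "h \<in> borel_measurable M"
    and "integrable M (\<lambda>x. f x * g x)"
    and "AE x in M. real_cond_exp M F g x = h x"
  shows "(\<integral>x. f x * g x \<partial>M) = (\<integral>x. f x * h x \<partial>M)"
proof -
  have [measurable]: "f \<in> borel_measurable M"
    using measurable_from_subalg[OF subalg assms(1)] .
  have "(\<integral>x. f x * g x \<partial>M) = (\<integral>x. f x * real_cond_exp M F g x \<partial>M)"
    using real_cond_exp_intg(2)[OF assms(4)] by simp
  also have "\<dots> = (\<integral>x. f x * h x \<partial>M)"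
    by (rule integral_cong_AE) (use assms(5) in auto)
  finally show ?thesis .
qed

context finite_measure_subalgebra
begin

lemma real_cond_exp_abs_le_const:
  assumes [measurable]: "f \<in> borel_measurable M" and bound: "\<And>x. \<bar>f x\<bar> \<le> c"
  shows "AE x in M. \<bar>real_cond_exp M F f x\<bar> \<le> c"
proof -
  have lower: "- c \<le> f x" and upper: "f x \<le> c" for x
    using bound[of x] by (auto simp: abs_le_iff)
  have int: "integrable M f"
    by (rule integrable_const_bound[where B=c]) (auto simp: bound)
  have "AE x in M. real_cond_exp M F f x \<le> c"
    by (rule real_cond_exp_le_c[OF int]) (use upper in auto)
  moreover have "AE x in M. - c \<le> real_cond_exp M F f x"
    by (rule real_cond_exp_ge_c[OF int]) (use lower in auto)
  ultimately show ?thesis by eventually_elim auto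
qed

lemma integral_mult_cond_exp_of_cond_indep:
  fixes U V :: "'a \<Rightarrow> real"
  assumes [measurable]: "U \<in> borel_measurable M" "V \<in> borel_measurable M"
    and U_bound: "\<And>x. \<bar>U x\<bar> \<le> a" and V_bound: "\<And>x. \<bar>V x\<bar> \<le> b"
    and indep: "AE x in M. real_cond_exp M F (\<lambda>x. U x * V x) x
                  = real_cond_exp M F U x * real_cond_exp M F V x"
  shows "(\<integral>x. U x * V x \<partial>M) = (\<integral>x. U x * real_cond_exp M F V x \<partial>M)"
proof -
  have "0 \<le> a" "0 \<le> b" using U_bound V_bound order_trans abs_ge_zero by blast+
  have "integrable M (\<lambda>x. U x * V x)"
    by (rule integrable_const_bound[where B="a * b"])
      (auto simp: abs_mult intro!: mult_mono U_bound V_bound \<open>0 \<le> a\<close>)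
  then have "(\<integral>x. U x * V x \<partial>M) = (\<integral>x. real_cond_exp M F (\<lambda>x. U x * V x) x \<partial>M)"
    by (simp add: real_cond_exp_int(2))
  also have "\<dots> = (\<integral>x. real_cond_exp M F U x * real_cond_exp M F V x \<partial>M)"
    by (rule integral_cong_AE) (use indep in auto)
  also have "\<dots> = (\<integral>x. real_cond_exp M F V x * U x \<partial>M)"
  proof -
    have "AE x in M. norm (real_cond_exp M F V x * U x) \<le> b * a"
      using real_cond_exp_abs_le_const[OF assms(2) V_bound]
      by eventually_elim (auto simp: abs_mult intro!: mult_mono U_bound \<open>0 \<le> b\<close>)
    then have "integrable M (\<lambda>x. real_cond_exp M F V x * U x)"
      by (rule integrable_const_bound) measurable
    then show ?thesis
      using real_cond_exp_intg(2)[of "real_cond_exp M F V" U] by (simp add: mult.commute)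
  qed
  finally show ?thesis by (simp add: mult.commute)
qed

lemma integral_mult_bounded_eq_cond_exp:
  fixes X V GX :: "'a \<Rightarrow> real"
  assumes [measurable]: "X \<in> borel_measurable M" "V \<in> borel_measurable M" "GX \<in> borel_measurable F"
    and "integrable M X" "integrable M GX"
    and V_bound: "\<And>x. \<bar>V x\<bar> \<le> b"
    and cond_X: "AE x in M. real_cond_exp M F X x = GX x"
    and indep: "\<And>m::nat. AE x in M. real_cond_exp M F (\<lambda>x. trunc (real m) (X x) * V x) x
                  = real_cond_exp M F (\<lambda>x. trunc (real m) (X x)) x * real_cond_exp M F V x"
  shows "(\<integral>x. X x * V x \<partial>M) = (\<integral>x. GX x * V x \<partial>M)"
proof -
  define CV where "CV = real_cond_exp M F V"
  have [measurable]: "CV \<in> borel_measurable F" "CV \<in> borel_measurable M" "GX \<in> borel_measurable M"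
    unfolding CV_def using measurable_from_subalg[OF subalg assms(3)] by auto
  have CV_bound: "AE x in M. \<bar>CV x\<bar> \<le> b"
    unfolding CV_def by (rule real_cond_exp_abs_le_const[OF assms(2) V_bound])
  have int_XV: "integrable M (\<lambda>x. X x * V x)"
    using V_bound by (intro integrable_mult_bounded) (auto simp: assms(4))
  have int_XCV: "integrable M (\<lambda>x. X x * CV x)"
    using CV_bound by (intro integrable_mult_bounded) (auto simp: assms(4))
  have int_GXV: "integrable M (\<lambda>x. GX x * V x)"
    using V_bound by (intro integrable_mult_bounded) (auto simp: assms(5))
  have "(\<lambda>m. \<integral>x. trunc (real m) (X x) * V x \<partial>M) \<longlonglongrightarrow> (\<integral>x. X x * V x \<partial>M)"
    by (rule integral_trunc_mult_tendsto[OF _ _ int_XV]) measurable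
  moreover have "(\<lambda>m. \<integral>x. trunc (real m) (X x) * V x \<partial>M) \<longlonglongrightarrow> (\<integral>x. X x * CV x \<partial>M)"
    using integral_trunc_mult_tendsto[OF _ _ int_XCV]
      integral_mult_cond_exp_of_cond_indep[OF _ _ abs_trunc_le_bound V_bound indep]
    by (simp add: CV_def)
  ultimately have "(\<integral>x. X x * V x \<partial>M) = (\<integral>x. CV x * X x \<partial>M)"
    by (simp add: LIMSEQ_unique mult.commute)
  also have "\<dots> = (\<integral>x. CV x * GX x \<partial>M)"
    by (rule integral_mult_cond_exp_AE[OF _ _ _ _ cond_X]) (use int_XCV in \<open>simp_all add: mult.commute\<close>)
  also have "\<dots> = (\<integral>x. GX x * V x \<partial>M)"
    using real_cond_exp_intg(2)[of GX V] int_GXV unfolding CV_def by (simp add: mult.commute)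
  finally show ?thesis .
qed

text \<open>Conditional independence is only available for bounded test functions, so the
  product rule \<open>E[X Y] = E[E[X|F] Y]\<close> is obtained by truncating \<open>X\<close> and \<open>Y\<close> and passing
  to the limit by dominated convergence.\<close>
lemma integral_centered_mult_eq_0:
  fixes X Y GX GY :: "'a \<Rightarrow> real"
  assumes [measurable]: "X \<in> borel_measurable M" "Y \<in> borel_measurable M"
      "GX \<in> borel_measurable F" "GY \<in> borel_measurable F"
    and square_integrable: "integrable M (\<lambda>x. (X x)\<^sup>2)" "integrable M (\<lambda>x. (Y x)\<^sup>2)"
      "integrable M (\<lambda>x. (GX x)\<^sup>2)" "integrable M (\<lambda>x. (GY x)\<^sup>2)"
    and cond_X: "AE x in M. real_cond_exp M F X x = GX x"
    and cond_Y: "AE x in M. real_cond_exp M F Y x = GY x"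
    and indep: "\<And>m n::nat. AE x in M.
        real_cond_exp M F (\<lambda>x. trunc (real m) (X x) * trunc (real n) (Y x)) x
      = real_cond_exp M F (\<lambda>x. trunc (real m) (X x)) x * real_cond_exp M F (\<lambda>x. trunc (real n) (Y x)) x"
  shows "(\<integral>x. (X x - GX x) * (Y x - GY x) \<partial>M) = 0"
proof -
  have [measurable]: "GX \<in> borel_measurable M" "GY \<in> borel_measurable M"
    using measurable_from_subalg[OF subalg assms(3)] measurable_from_subalg[OF subalg assms(4)] by auto
  have "integrable M X" "integrable M GX"
    by (auto intro: square_integrable_imp_integrable square_integrable)
  have int_prod: "integrable M (\<lambda>x. A x * B x)"
    if "A \<in> {X, Y, GX, GY}" "B \<in> {X, Y, GX, GY}" for A B
    using that by (auto intro!: integrable_mult_of_square_integrable simp: square_integrable)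
  have "(\<integral>x. trunc (real n) (Y x) * X x \<partial>M) = (\<integral>x. trunc (real n) (Y x) * GX x \<partial>M)" for n
    using integral_mult_bounded_eq_cond_exp[OF _ _ _ \<open>integrable M X\<close> \<open>integrable M GX\<close>
        abs_trunc_le_bound cond_X indep]
    by (simp add: mult.commute)
  then have "(\<integral>x. Y x * X x \<partial>M) = (\<integral>x. Y x * GX x \<partial>M)"
    using integral_trunc_mult_tendsto[of Y M X] integral_trunc_mult_tendsto[of Y M GX] int_prod
    by (simp add: LIMSEQ_unique)
  moreover have "(\<integral>x. GX x * Y x \<partial>M) = (\<integral>x. GX x * GY x \<partial>M)"
    using int_prod by (intro integral_mult_cond_exp_AE[OF _ _ _ _ cond_Y]) auto
  moreover have "(\<integral>x. GY x * X x \<partial>M) = (\<integral>x. GY x * GX x \<partial>M)"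
    using int_prod by (intro integral_mult_cond_exp_AE[OF _ _ _ _ cond_X]) auto
  moreover have "(\<lambda>x. (X x - GX x) * (Y x - GY x)) = (\<lambda>x. Y x * X x - GY x * X x - GX x * Y x + GX x * GY x)"
    by (auto simp: algebra_simps)
  ultimately show ?thesis
    using int_prod by (simp add: mult.commute)
qed

end

lemma prod_if_pair:
  assumes "finite A" "i \<in> A" "j \<in> A" "i \<noteq> j"
  shows "(\<Prod>l\<in>A. if l = i then a l else if l = j then b l else 1) = a i * b j"
proof -
  have "(\<Prod>l\<in>A. if l = i then a l else if l = j then b l else 1)
      = (\<Prod>l\<in>A. (if l = i then a l else 1) * (if l = j then b l else 1))"
    by (rule prod.cong) (use assms in auto)
  then show ?thesis
    using assms by (simp add: prod.distrib)
qed

locale fedslop_round = prob_space M for M :: "'a measure" +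
  fixes P :: "'a \<Rightarrow> real^'r^'d" and g :: "nat \<Rightarrow> nat \<Rightarrow> 'a \<Rightarrow> real^'d"
    and gradF :: "nat \<Rightarrow> real^'d \<Rightarrow> real^'d" and gradf :: "real^'d \<Rightarrow> real^'d"
    and th0 :: "real^'d" and N \<tau> :: nat and \<mu> \<eta> L \<sigma>L :: real
  assumes N_pos: "0 < N" and tau_pos: "0 < \<tau>"
    and mu_nonneg: "0 \<le> \<mu>" and mu_less_1: "\<mu> < 1" and eta_pos: "0 < \<eta>" and L_pos: "0 < L"
    and gradf_eq_average: "\<And>x. gradf x = (1 / real N) *\<^sub>R (\<Sum>i<N. gradF i x)"
    and F_smooth: "\<And>i x y. i < N \<Longrightarrow> norm (gradF i x - gradF i y) \<le> L * norm (x - y)"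
    and haar: "haar_stiefel M P"
    and g_meas: "\<And>i s. i < N \<Longrightarrow> s < \<tau> \<Longrightarrow> g i s \<in> borel_measurable M"
    and unbiased: "\<And>i s k. i < N \<Longrightarrow> s < \<tau> \<Longrightarrow>
        AE \<omega> in M. real_cond_exp M (past_sa M N P g s) (\<lambda>\<omega>. g i s \<omega> $ k) \<omega>
                    = gradF i (client_theta \<eta> \<mu> th0 P g i s \<omega>) $ k"
    and variance: "\<And>i s. i < N \<Longrightarrow> s < \<tau> \<Longrightarrow>
        AE \<omega> in M. nn_cond_exp M (past_sa M N P g s)
            (\<lambda>\<omega>. ennreal ((norm (g i s \<omega> - gradF i (client_theta \<eta> \<mu> th0 P g i s \<omega>)))\<^sup>2)) \<omega>
          \<le> ennreal (\<sigma>L\<^sup>2)"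
    and cond_indep: "\<And>s (h :: nat \<Rightarrow> real^'d \<Rightarrow> real) B. s < \<tau> \<Longrightarrow>
        (\<And>i. h i \<in> borel_measurable borel) \<Longrightarrow> (\<And>i x. \<bar>h i x\<bar> \<le> B) \<Longrightarrow>
        AE \<omega> in M. real_cond_exp M (past_sa M N P g s) (\<lambda>\<omega>. \<Prod>i<N. h i (g i s \<omega>)) \<omega>
                    = (\<Prod>i<N. real_cond_exp M (past_sa M N P g s) (\<lambda>\<omega>. h i (g i s \<omega>)) \<omega>)"
begin

abbreviation "theta \<equiv> client_theta \<eta> \<mu> th0 P g"
abbreviation "past s \<equiv> past_sa M N P g s"
abbreviation "proj \<omega> \<equiv> P \<omega> ** transpose (P \<omega>)"
abbreviation "grad i q \<omega> \<equiv> gradF i (theta i q \<omega>)"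
abbreviation "noise i q \<omega> \<equiv> g i q \<omega> - grad i q \<omega>"
abbreviation "avg_grad q \<omega> \<equiv> (1 / real N) *\<^sub>R (\<Sum>i<N. grad i q \<omega>)"
abbreviation "avg_noise q \<omega> \<equiv> (1 / real N) *\<^sub>R (\<Sum>i<N. noise i q \<omega>)"
abbreviation "drift i q \<omega> \<equiv> (norm (theta i q \<omega> - th0))\<^sup>2"
abbreviation "avg_g q \<omega> \<equiv> (1 / real N) *\<^sub>R (\<Sum>i<N. g i q \<omega>)"
abbreviation "avg_update \<omega> \<equiv> (1 / real N) *\<^sub>R (\<Sum>i<N. theta i \<tau> \<omega> - th0)"

lemma P_meas [measurable]: "P \<in> borel_measurable M"
  and stiefel: "\<omega> \<in> space M \<Longrightarrow> transpose (P \<omega>) ** P \<omega> = mat 1"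
  using haar_stiefel_meas haar_stiefel_orthonormal prob_space_axioms haar by auto

lemma past_generators_Pow:
  "{P -` A \<inter> space M | A. A \<in> sets borel} \<union>
      {g j q -` A \<inter> space M | j q A. j < N \<and> q < s \<and> A \<in> sets borel} \<subseteq> Pow (space M)"
  by auto

lemma finite_measure_subalgebra_past:
  assumes "s \<le> \<tau>"
  shows "finite_measure_subalgebra M (past s)"
proof unfold_locales
  have "{P -` A \<inter> space M | A. A \<in> sets borel} \<union>
      {g j q -` A \<inter> space M | j q A. j < N \<and> q < s \<and> A \<in> sets borel} \<subseteq> sets M"
    using assms g_meas by (auto simp: measurable_sets)
  then show "subalgebra M (past s)"
    unfolding subalgebra_def past_sa_def using past_generators_Pow[of s]
    by (simp add: space_measure_of_conv sets_measure_of sets.sigma_sets_subset)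
qed

lemma P_meas_past: "P \<in> borel_measurable (past s)"
  unfolding past_sa_def by (rule measurable_sigma_generator[OF past_generators_Pow]) auto

lemma g_meas_past: "j < N \<Longrightarrow> q < s \<Longrightarrow> g j q \<in> borel_measurable (past s)"
  unfolding past_sa_def by (rule measurable_sigma_generator[OF past_generators_Pow]) blast

lemma theta_eq: "theta i s \<omega> = th0 - \<eta> *\<^sub>R (\<Sum>q<s. mom_alpha \<mu> s q *\<^sub>R (proj \<omega> *v g i q \<omega>))"
  using mu_less_1 unfolding client_theta_def by (simp add: local_iter_eq)

lemma theta_meas_gen:
  assumes [measurable]: "\<And>q. q < s \<Longrightarrow> g i q \<in> borel_measurable Ms" "P \<in> borel_measurable Ms"
  shows "theta i s \<in> borel_measurable Ms"
proof -
  have "theta i s = (\<lambda>\<omega>. th0 - \<eta> *\<^sub>R (\<Sum>q<s. mom_alpha \<mu> s q *\<^sub>R (proj \<omega> *v g i q \<omega>)))"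
    by (rule ext) (rule theta_eq)
  also have "\<dots> \<in> borel_measurable Ms"
    by (intro borel_measurable_diff borel_measurable_const borel_measurable_scaleR
        borel_measurable_sum borel_measurable_matrix_vector_mult borel_measurable_matrix_matrix_mult
        borel_measurable_transpose assms) auto
  finally show ?thesis .
qed

lemma theta_meas_past: "i < N \<Longrightarrow> theta i s \<in> borel_measurable (past s)"
  by (rule theta_meas_gen) (auto intro: g_meas_past P_meas_past)

lemma theta_meas [measurable]: "i < N \<Longrightarrow> s \<le> \<tau> \<Longrightarrow> theta i s \<in> borel_measurable M"
  by (rule theta_meas_gen) (auto intro: g_meas)

lemma gradF_meas [measurable]: "i < N \<Longrightarrow> gradF i \<in> borel_measurable borel"
  using F_smooth L_pos
  by (intro borel_measurable_continuous_onI lipschitz_on_continuous_on[of L] lipschitz_onI)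
    (auto simp: dist_norm)

lemma grad_meas_past: "i < N \<Longrightarrow> (\<lambda>\<omega>. grad i q \<omega>) \<in> borel_measurable (past q)"
  using measurable_compose[OF theta_meas_past gradF_meas] .

lemma noise_meas [measurable]: "i < N \<Longrightarrow> q < \<tau> \<Longrightarrow> (\<lambda>\<omega>. noise i q \<omega>) \<in> borel_measurable M"
  using g_meas by measurable

lemma nn_integral_noise_sq_le:
  assumes "i < N" "q < \<tau>"
  shows "(\<integral>\<^sup>+\<omega>. ennreal ((norm (noise i q \<omega>))\<^sup>2) \<partial>M) \<le> ennreal (\<sigma>L\<^sup>2)"
proof -
  interpret sub: finite_measure_subalgebra M "past q"
    using finite_measure_subalgebra_past assms(2) by simp
  have "(\<integral>\<^sup>+\<omega>. ennreal ((norm (noise i q \<omega>))\<^sup>2) \<partial>M)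
      = (\<integral>\<^sup>+\<omega>. 1 * nn_cond_exp M (past q) (\<lambda>\<omega>. ennreal ((norm (noise i q \<omega>))\<^sup>2)) \<omega> \<partial>M)"
    by (subst sub.nn_cond_exp_intg) (use assms in auto)
  also have "\<dots> \<le> (\<integral>\<^sup>+\<omega>. ennreal (\<sigma>L\<^sup>2) \<partial>M)"
    using variance[OF assms] by (intro nn_integral_mono_AE) auto
  also have "\<dots> = ennreal (\<sigma>L\<^sup>2)"
    by (simp add: emeasure_space_1)
  finally show ?thesis .
qed

lemma integrable_noise_sq:
  assumes "i < N" "q < \<tau>"
  shows "integrable M (\<lambda>\<omega>. (norm (noise i q \<omega>))\<^sup>2)"
  using le_less_trans[OF nn_integral_noise_sq_le[OF assms] ennreal_less_top] assms
  by (intro integrableI_bounded) simp_all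

lemma integral_noise_sq_le: "i < N \<Longrightarrow> q < \<tau> \<Longrightarrow> (\<integral>\<omega>. (norm (noise i q \<omega>))\<^sup>2 \<partial>M) \<le> \<sigma>L\<^sup>2"
  using nn_integral_noise_sq_le integrable_noise_sq
  by (simp add: nn_integral_eq_integral ennreal_le_iff)

lemma norm_grad_diff_sq_le: "i < N \<Longrightarrow> (norm (grad i q \<omega> - gradF i th0))\<^sup>2 \<le> L\<^sup>2 * drift i q \<omega>"
  using power_mono[OF F_smooth norm_ge_zero] by (simp add: power_mult_distrib)

lemma integrable_grad_sq:
  assumes "i < N" "q \<le> \<tau>" "integrable M (drift i q)"
  shows "integrable M (\<lambda>\<omega>. (norm (grad i q \<omega>))\<^sup>2)"
proof (rule integrable_norm_sq_le[where f="\<lambda>\<omega>. 2 * (norm (gradF i th0))\<^sup>2 + 2 * (L\<^sup>2 * drift i q \<omega>)"])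
  show "integrable M (\<lambda>\<omega>. 2 * (norm (gradF i th0))\<^sup>2 + 2 * (L\<^sup>2 * drift i q \<omega>))"
    using assms(3) by auto
  fix \<omega>
  show "(norm (grad i q \<omega>))\<^sup>2 \<le> 2 * (norm (gradF i th0))\<^sup>2 + 2 * (L\<^sup>2 * drift i q \<omega>)"
    using norm_add_sq_le[of "gradF i th0" "grad i q \<omega> - gradF i th0"] norm_grad_diff_sq_le[OF assms(1), of q \<omega>]
    by simp
qed (use assms in measurable)

lemma integrable_g_sq:
  assumes "i < N" "q < \<tau>" "integrable M (drift i q)"
  shows "integrable M (\<lambda>\<omega>. (norm (g i q \<omega>))\<^sup>2)"
proof (rule integrable_norm_sq_le[where f="\<lambda>\<omega>. 2 * (norm (grad i q \<omega>))\<^sup>2 + 2 * (norm (noise i q \<omega>))\<^sup>2"])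
  show "integrable M (\<lambda>\<omega>. 2 * (norm (grad i q \<omega>))\<^sup>2 + 2 * (norm (noise i q \<omega>))\<^sup>2)"
    using assms integrable_grad_sq integrable_noise_sq by auto
  fix \<omega>
  show "(norm (g i q \<omega>))\<^sup>2 \<le> 2 * (norm (grad i q \<omega>))\<^sup>2 + 2 * (norm (noise i q \<omega>))\<^sup>2"
    using norm_add_sq_le[of "grad i q \<omega>" "noise i q \<omega>"] by simp
qed (use assms g_meas in simp)

lemma integral_inner_noise_eq_0:
  assumes "i < N" "q < \<tau>" "integrable M (drift i q)"
    and Z_meas: "Z \<in> borel_measurable (past q)" and Z_sq: "integrable M (\<lambda>\<omega>. (norm (Z \<omega>))\<^sup>2)"
  shows "integrable M (\<lambda>\<omega>. Z \<omega> \<bullet> noise i q \<omega>)" and "(\<integral>\<omega>. Z \<omega> \<bullet> noise i q \<omega> \<partial>M) = 0"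
proof -
  interpret sub: finite_measure_subalgebra M "past q"
    using finite_measure_subalgebra_past assms(2) by simp
  have [measurable]: "Z \<in> borel_measurable M" "g i q \<in> borel_measurable M"
    using measurable_from_subalg[OF sub.subalg Z_meas] g_meas assms by auto
  have g_sq: "integrable M (\<lambda>\<omega>. (norm (g i q \<omega>))\<^sup>2)"
    and grad_sq: "integrable M (\<lambda>\<omega>. (norm (grad i q \<omega>))\<^sup>2)"
    using assms integrable_g_sq integrable_grad_sq by auto
  have "(\<integral>\<omega>. Z \<omega> $ k * g i q \<omega> $ k \<partial>M) = (\<integral>\<omega>. Z \<omega> $ k * grad i q \<omega> $ k \<partial>M)" for k
    using assms Z_sq g_sq unbiased
    by (intro sub.integral_mult_cond_exp_AE integrable_mult_of_square_integrable integrable_vec_nth_sq)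
      auto
  then have "(\<integral>\<omega>. Z \<omega> \<bullet> g i q \<omega> \<partial>M) = (\<integral>\<omega>. Z \<omega> \<bullet> grad i q \<omega> \<partial>M)"
    using assms Z_sq g_sq grad_sq by (simp add: integrable_inner_vec)
  moreover have "integrable M (\<lambda>\<omega>. Z \<omega> \<bullet> g i q \<omega>)" "integrable M (\<lambda>\<omega>. Z \<omega> \<bullet> grad i q \<omega>)"
    using assms Z_sq g_sq grad_sq by (auto intro!: integrable_inner_vec(1))
  ultimately show "integrable M (\<lambda>\<omega>. Z \<omega> \<bullet> noise i q \<omega>)" "(\<integral>\<omega>. Z \<omega> \<bullet> noise i q \<omega> \<partial>M) = 0"
    by (simp_all add: inner_diff_right)
qed

lemma real_cond_exp_mult_two_clients:
  assumes "q < \<tau>" "i < N" "j < N" "i \<noteq> j"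
    and [measurable]: "u \<in> borel_measurable borel" "v \<in> borel_measurable borel"
    and u_bound: "\<And>x. \<bar>u x\<bar> \<le> a" and v_bound: "\<And>x. \<bar>v x\<bar> \<le> b"
  shows "AE \<omega> in M. real_cond_exp M (past q) (\<lambda>\<omega>. u (g i q \<omega>) * v (g j q \<omega>)) \<omega>
      = real_cond_exp M (past q) (\<lambda>\<omega>. u (g i q \<omega>)) \<omega> * real_cond_exp M (past q) (\<lambda>\<omega>. v (g j q \<omega>)) \<omega>"
proof -
  interpret sub: finite_measure_subalgebra M "past q"
    using finite_measure_subalgebra_past assms(1) by simp
  define h where "h l x = (if l = i then u x else if l = j then v x else 1)" for l x
  have "h l \<in> borel_measurable borel" for l
    unfolding h_def by measurable
  moreover have "\<bar>h l x\<bar> \<le> \<bar>a\<bar> + \<bar>b\<bar> + 1" for l x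
    using u_bound[of x] v_bound[of x] unfolding h_def by auto
  ultimately have "AE \<omega> in M. real_cond_exp M (past q) (\<lambda>\<omega>. \<Prod>l<N. h l (g l q \<omega>)) \<omega>
      = (\<Prod>l<N. real_cond_exp M (past q) (\<lambda>\<omega>. h l (g l q \<omega>)) \<omega>)"
    by (rule cond_indep[OF assms(1)])
  moreover have "AE \<omega> in M. real_cond_exp M (past q) (\<lambda>\<omega>. 1) \<omega> = 1"
    by (rule sub.real_cond_exp_F_meas) auto
  ultimately show ?thesis
  proof eventually_elim
    case (elim \<omega>)
    have "(\<lambda>\<omega>. \<Prod>l<N. h l (g l q \<omega>)) = (\<lambda>\<omega>. u (g i q \<omega>) * v (g j q \<omega>))"
      unfolding h_def using assms by (intro ext prod_if_pair) auto
    moreover have "(\<Prod>l<N. real_cond_exp M (past q) (\<lambda>\<omega>. h l (g l q \<omega>)) \<omega>)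
       = (\<Prod>l<N. if l = i then real_cond_exp M (past q) (\<lambda>\<omega>. u (g i q \<omega>)) \<omega>
            else if l = j then real_cond_exp M (past q) (\<lambda>\<omega>. v (g j q \<omega>)) \<omega> else 1)"
      by (rule prod.cong) (use elim assms in \<open>auto simp: h_def\<close>)
    ultimately show ?case
      using elim(1) assms by (simp add: prod_if_pair)
  qed
qed

lemma integral_inner_noise_noise_eq_0:
  assumes "q < \<tau>" "i < N" "j < N" "i \<noteq> j"
    and "integrable M (drift i q)" "integrable M (drift j q)"
  shows "(\<integral>\<omega>. noise i q \<omega> \<bullet> noise j q \<omega> \<partial>M) = 0"
proof -
  interpret sub: finite_measure_subalgebra M "past q"
    using finite_measure_subalgebra_past assms(1) by simp
  have [measurable]: "g i q \<in> borel_measurable M" "g j q \<in> borel_measurable M"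
    using g_meas assms by auto
  have component_sq: "integrable M (\<lambda>\<omega>. (g l q \<omega> $ k)\<^sup>2)" "integrable M (\<lambda>\<omega>. (grad l q \<omega> $ k)\<^sup>2)"
    if "l \<in> {i, j}" for l k
    using that assms integrable_g_sq integrable_grad_sq g_meas
    by (auto intro!: integrable_vec_nth_sq)
  have "(\<integral>\<omega>. (g i q \<omega> $ k - grad i q \<omega> $ k) * (g j q \<omega> $ k - grad j q \<omega> $ k) \<partial>M) = 0" for k
  proof (rule sub.integral_centered_mult_eq_0)
    fix m n :: nat
    show "AE \<omega> in M. real_cond_exp M (past q) (\<lambda>\<omega>. trunc (real m) (g i q \<omega> $ k) * trunc (real n) (g j q \<omega> $ k)) \<omega>
        = real_cond_exp M (past q) (\<lambda>\<omega>. trunc (real m) (g i q \<omega> $ k)) \<omega>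
          * real_cond_exp M (past q) (\<lambda>\<omega>. trunc (real n) (g j q \<omega> $ k)) \<omega>"
      using real_cond_exp_mult_two_clients[OF assms(1-4),
          of "\<lambda>x. trunc (real m) (x $ k)" "\<lambda>x. trunc (real n) (x $ k)" "real m" "real n"]
      by (simp add: abs_trunc_le_bound)
  qed (use assms component_sq unbiased grad_meas_past in auto)
  moreover have "(\<integral>\<omega>. noise i q \<omega> \<bullet> noise j q \<omega> \<partial>M)
      = (\<Sum>k\<in>UNIV. \<integral>\<omega>. noise i q \<omega> $ k * noise j q \<omega> $ k \<partial>M)"
    using assms by (intro integrable_inner_vec(2) integrable_noise_sq) auto
  ultimately show ?thesis by simp
qed

lemma integral_norm_avg_noise_sq:
  assumes q: "q < \<tau>" and drift_int: "\<And>i. i < N \<Longrightarrow> integrable M (drift i q)"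
  shows "integrable M (\<lambda>\<omega>. (norm (avg_noise q \<omega>))\<^sup>2)"
    and "(\<integral>\<omega>. (norm (avg_noise q \<omega>))\<^sup>2 \<partial>M) \<le> \<sigma>L\<^sup>2 / real N"
proof -
  have int: "integrable M (\<lambda>\<omega>. noise i q \<omega> \<bullet> noise j q \<omega>)" if "i < N" "j < N" for i j
    using that q by (intro integrable_inner_vec(1) integrable_noise_sq) auto
  have expand: "(norm (avg_noise q \<omega>))\<^sup>2 = (1 / real N)\<^sup>2 * (\<Sum>i<N. \<Sum>j<N. noise i q \<omega> \<bullet> noise j q \<omega>)" for \<omega>
    using power2_norm_sum[of "\<lambda>i. noise i q \<omega>" "{..<N}"] by (simp add: power_divide)
  show "integrable M (\<lambda>\<omega>. (norm (avg_noise q \<omega>))\<^sup>2)"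
    unfolding expand by (intro Bochner_Integration.integrable_mult_right Bochner_Integration.integrable_sum int) auto
  have "(\<integral>\<omega>. (norm (avg_noise q \<omega>))\<^sup>2 \<partial>M)
      = (1 / real N)\<^sup>2 * (\<Sum>i<N. \<Sum>j<N. \<integral>\<omega>. noise i q \<omega> \<bullet> noise j q \<omega> \<partial>M)"
  proof -
    have "(\<integral>\<omega>. (\<Sum>i<N. \<Sum>j<N. noise i q \<omega> \<bullet> noise j q \<omega>) \<partial>M)
        = (\<Sum>i<N. \<integral>\<omega>. (\<Sum>j<N. noise i q \<omega> \<bullet> noise j q \<omega>) \<partial>M)"
      by (rule Bochner_Integration.integral_sum) (auto intro!: Bochner_Integration.integrable_sum int)
    also have "\<dots> = (\<Sum>i<N. \<Sum>j<N. \<integral>\<omega>. noise i q \<omega> \<bullet> noise j q \<omega> \<partial>M)"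
      by (intro sum.cong refl Bochner_Integration.integral_sum) (auto intro: int)
    finally show ?thesis
      unfolding expand by simp
  qed
  also have "\<dots> = (1 / real N)\<^sup>2 * (\<Sum>i<N. \<integral>\<omega>. (norm (noise i q \<omega>))\<^sup>2 \<partial>M)"
  proof -
    have "(\<Sum>j<N. \<integral>\<omega>. noise i q \<omega> \<bullet> noise j q \<omega> \<partial>M) = (\<integral>\<omega>. (norm (noise i q \<omega>))\<^sup>2 \<partial>M)"
      if i: "i < N" for i
    proof -
      have "(\<Sum>j<N. \<integral>\<omega>. noise i q \<omega> \<bullet> noise j q \<omega> \<partial>M)
          = (\<Sum>j<N. if j = i then \<integral>\<omega>. noise i q \<omega> \<bullet> noise i q \<omega> \<partial>M else 0)"
        using integral_inner_noise_noise_eq_0[OF q i] drift_int i by (intro sum.cong) auto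
      then show ?thesis
        using i by (simp add: power2_norm_eq_inner)
    qed
    then show ?thesis by simp
  qed
  also have "\<dots> \<le> (1 / real N)\<^sup>2 * (\<Sum>i<N. \<sigma>L\<^sup>2)"
    using q by (intro mult_left_mono sum_mono integral_noise_sq_le) auto
  also have "\<dots> = \<sigma>L\<^sup>2 / real N"
    using N_pos by (simp add: power2_eq_square)
  finally show "(\<integral>\<omega>. (norm (avg_noise q \<omega>))\<^sup>2 \<partial>M) \<le> \<sigma>L\<^sup>2 / real N" .
qed

lemma integral_inner_avg_noise_eq_0:
  assumes q: "q < \<tau>" and drift_int: "\<And>i. i < N \<Longrightarrow> integrable M (drift i q)"
    and "Z \<in> borel_measurable (past q)" "integrable M (\<lambda>\<omega>. (norm (Z \<omega>))\<^sup>2)"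
  shows "integrable M (\<lambda>\<omega>. Z \<omega> \<bullet> avg_noise q \<omega>)" and "(\<integral>\<omega>. Z \<omega> \<bullet> avg_noise q \<omega> \<partial>M) = 0"
proof -
  have expand: "Z \<omega> \<bullet> avg_noise q \<omega> = (1 / real N) * (\<Sum>i<N. Z \<omega> \<bullet> noise i q \<omega>)" for \<omega>
    by (simp add: inner_sum_right)
  show "integrable M (\<lambda>\<omega>. Z \<omega> \<bullet> avg_noise q \<omega>)"
    unfolding expand using assms
    by (intro Bochner_Integration.integrable_mult_right Bochner_Integration.integrable_sum
        integral_inner_noise_eq_0(1)) auto
  show "(\<integral>\<omega>. Z \<omega> \<bullet> avg_noise q \<omega> \<partial>M) = 0"
    unfolding expand using integral_inner_noise_eq_0 assms by (simp add: Bochner_Integration.integral_sum)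
qed

lemma norm_proj_avg_grad_sq_le:
  assumes "\<omega> \<in> space M"
  shows "(norm (proj \<omega> *v avg_grad q \<omega>))\<^sup>2
    \<le> 2 * (norm (transpose (P \<omega>) *v gradf th0))\<^sup>2 + 2 * L\<^sup>2 * ((1 / real N) * (\<Sum>i<N. drift i q \<omega>))"
proof -
  note stiefel = stiefel[OF assms]
  have decomp: "proj \<omega> *v avg_grad q \<omega> = proj \<omega> *v gradf th0 + proj \<omega> *v (avg_grad q \<omega> - gradf th0)"
    by (simp add: matrix_vector_mult_diff_distrib)
  have "(norm (proj \<omega> *v avg_grad q \<omega>))\<^sup>2
      \<le> 2 * (norm (proj \<omega> *v gradf th0))\<^sup>2 + 2 * (norm (proj \<omega> *v (avg_grad q \<omega> - gradf th0)))\<^sup>2"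
    unfolding decomp by (rule norm_add_sq_le)
  moreover have "(norm (proj \<omega> *v (avg_grad q \<omega> - gradf th0)))\<^sup>2 \<le> (norm (avg_grad q \<omega> - gradf th0))\<^sup>2"
    by (intro power_mono norm_stiefel_proj_le[OF stiefel]) simp
  ultimately have split: "(norm (proj \<omega> *v avg_grad q \<omega>))\<^sup>2
      \<le> 2 * (norm (transpose (P \<omega>) *v gradf th0))\<^sup>2 + 2 * (norm (avg_grad q \<omega> - gradf th0))\<^sup>2"
    unfolding norm_stiefel_proj[OF stiefel, of "gradf th0"] by linarith
  have "(norm (avg_grad q \<omega> - gradf th0))\<^sup>2 \<le> (1 / real N) * (\<Sum>i<N. (norm (grad i q \<omega> - gradF i th0))\<^sup>2)"
    using norm_average_sq_le[OF N_pos, of "\<lambda>i. grad i q \<omega> - gradF i th0"]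
    by (simp add: gradf_eq_average sum_subtractf scaleR_diff_right)
  also have "\<dots> \<le> (1 / real N) * (\<Sum>i<N. L\<^sup>2 * drift i q \<omega>)"
    by (intro mult_left_mono sum_mono norm_grad_diff_sq_le) auto
  also have "\<dots> = L\<^sup>2 * ((1 / real N) * (\<Sum>i<N. drift i q \<omega>))"
    by (simp add: sum_distrib_left mult_ac)
  finally show ?thesis
    using split by linarith
qed

lemma proj_avg_grad_meas_past: "(\<lambda>\<omega>. proj \<omega> *v avg_grad q \<omega>) \<in> borel_measurable (past q)"
  by (intro borel_measurable_matrix_vector_mult borel_measurable_matrix_matrix_mult
      borel_measurable_transpose borel_measurable_scaleR borel_measurable_const
      borel_measurable_sum P_meas_past grad_meas_past) auto

lemma integrable_norm_proj_avg_grad_sq: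
  assumes q: "q < \<tau>" and drift_int: "\<And>i. i < N \<Longrightarrow> integrable M (drift i q)"
  shows "integrable M (\<lambda>\<omega>. (norm (proj \<omega> *v avg_grad q \<omega>))\<^sup>2)"
proof (rule integrable_norm_sq_le[where f="\<lambda>\<omega>. (1 / real N) * (\<Sum>i<N. (norm (grad i q \<omega>))\<^sup>2)"])
  show "integrable M (\<lambda>\<omega>. (1 / real N) * (\<Sum>i<N. (norm (grad i q \<omega>))\<^sup>2))"
    using q drift_int
    by (intro Bochner_Integration.integrable_mult_right Bochner_Integration.integrable_sum
        integrable_grad_sq) auto
  show "(\<lambda>\<omega>. proj \<omega> *v avg_grad q \<omega>) \<in> borel_measurable M"
    using measurable_from_subalg[OF finite_measure_subalgebra.subalg proj_avg_grad_meas_past]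
      finite_measure_subalgebra_past q by simp
  show "(norm (proj \<omega> *v avg_grad q \<omega>))\<^sup>2 \<le> (1 / real N) * (\<Sum>i<N. (norm (grad i q \<omega>))\<^sup>2)"
    if "\<omega> \<in> space M" for \<omega>
    using power_mono[OF norm_stiefel_proj_le[OF stiefel[OF that]] norm_ge_zero, of "avg_grad q \<omega>" 2]
      norm_average_sq_le[OF N_pos, of "\<lambda>i. grad i q \<omega>"]
    by linarith
qed

text \<open>\<open>\<Pi> = P P\<^sup>T\<close> is an orthogonal projection, so it can be dropped from the noise term
  and from the cross term.\<close>
lemma norm_proj_avg_g_sq_le:
  assumes "\<omega> \<in> space M"
  shows "(norm (proj \<omega> *v ((1 / real N) *\<^sub>R (\<Sum>i<N. g i q \<omega>))))\<^sup>2
    \<le> 2 * (norm (transpose (P \<omega>) *v gradf th0))\<^sup>2 + 2 * L\<^sup>2 * ((1 / real N) * (\<Sum>i<N. drift i q \<omega>))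
      + 2 * ((proj \<omega> *v avg_grad q \<omega>) \<bullet> avg_noise q \<omega>) + (norm (avg_noise q \<omega>))\<^sup>2"
proof -
  note stiefel = stiefel[OF assms]
  have decomp: "proj \<omega> *v ((1 / real N) *\<^sub>R (\<Sum>i<N. g i q \<omega>))
      = proj \<omega> *v avg_grad q \<omega> + proj \<omega> *v avg_noise q \<omega>"
    by (simp add: sum_subtractf scaleR_diff_right matrix_vector_mult_diff_distrib
        flip: matrix_vector_right_distrib)
  have "(norm (proj \<omega> *v avg_noise q \<omega>))\<^sup>2 \<le> (norm (avg_noise q \<omega>))\<^sup>2"
    by (intro power_mono norm_stiefel_proj_le[OF stiefel]) simp
  then show ?thesis
    using norm_proj_avg_grad_sq_le[OF assms, of q]
    unfolding decomp norm_add_sq_eq inner_stiefel_proj_proj[OF stiefel] by linarith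
qed

definition step_bound :: "nat \<Rightarrow> real" where
  "step_bound q = 2 * (real CARD('r) / real CARD('d) * (norm (gradf th0))\<^sup>2) + \<sigma>L\<^sup>2 / real N
    + 2 * L\<^sup>2 * ((1 / real N) * (\<Sum>i<N. \<integral>\<omega>. drift i q \<omega> \<partial>M))"

lemma step_bound_nonneg: "0 \<le> step_bound q"
  unfolding step_bound_def by (intro add_nonneg_nonneg mult_nonneg_nonneg sum_nonneg) auto

lemma nn_integral_proj_avg_g_sq_le:
  assumes q: "q < \<tau>" and drift_int: "\<And>i. i < N \<Longrightarrow> integrable M (drift i q)"
  shows "(\<integral>\<^sup>+\<omega>. ennreal ((norm (proj \<omega> *v avg_g q \<omega>))\<^sup>2) \<partial>M) \<le> ennreal (step_bound q)"
proof -
  define A where "A \<omega> = (norm (transpose (P \<omega>) *v gradf th0))\<^sup>2" for \<omega>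
  define D where "D \<omega> = (1 / real N) * (\<Sum>i<N. drift i q \<omega>)" for \<omega>
  define C where "C \<omega> = (proj \<omega> *v avg_grad q \<omega>) \<bullet> avg_noise q \<omega>" for \<omega>
  define E where "E \<omega> = (norm (avg_noise q \<omega>))\<^sup>2" for \<omega>
  have A: "integrable M A" "(\<integral>\<omega>. A \<omega> \<partial>M) = real CARD('r) / real CARD('d) * (norm (gradf th0))\<^sup>2"
    unfolding A_def[abs_def]
    using haar_stiefel_integrable_sq[OF prob_space_axioms haar] haar_stiefel_second_moment[OF prob_space_axioms haar]
    by auto
  have D: "integrable M D" "(\<integral>\<omega>. D \<omega> \<partial>M) = (1 / real N) * (\<Sum>i<N. \<integral>\<omega>. drift i q \<omega> \<partial>M)"
    unfolding D_def[abs_def] using drift_int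
    by (auto intro!: Bochner_Integration.integrable_sum simp: Bochner_Integration.integral_sum)
  have C: "integrable M C" "(\<integral>\<omega>. C \<omega> \<partial>M) = 0"
    unfolding C_def[abs_def]
    using integral_inner_avg_noise_eq_0[OF q drift_int proj_avg_grad_meas_past
        integrable_norm_proj_avg_grad_sq[OF q drift_int]] by auto
  have E: "integrable M E" "(\<integral>\<omega>. E \<omega> \<partial>M) \<le> \<sigma>L\<^sup>2 / real N"
    unfolding E_def[abs_def] using integral_norm_avg_noise_sq[OF q drift_int] by auto
  have pointwise: "(norm (proj \<omega> *v ((1 / real N) *\<^sub>R (\<Sum>i<N. g i q \<omega>))))\<^sup>2
      \<le> 2 * A \<omega> + 2 * L\<^sup>2 * D \<omega> + 2 * C \<omega> + E \<omega>" if "\<omega> \<in> space M" for \<omega>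
    unfolding A_def D_def C_def E_def by (rule norm_proj_avg_g_sq_le[OF that])
  have "(\<integral>\<^sup>+\<omega>. ennreal ((norm (proj \<omega> *v ((1 / real N) *\<^sub>R (\<Sum>i<N. g i q \<omega>))))\<^sup>2) \<partial>M)
      \<le> (\<integral>\<^sup>+\<omega>. ennreal (2 * A \<omega> + 2 * L\<^sup>2 * D \<omega> + 2 * C \<omega> + E \<omega>) \<partial>M)"
    using pointwise by (intro nn_integral_mono ennreal_leI)
  also have "\<dots> = ennreal (\<integral>\<omega>. 2 * A \<omega> + 2 * L\<^sup>2 * D \<omega> + 2 * C \<omega> + E \<omega> \<partial>M)"
    using pointwise A(1) D(1) C(1) E(1)
    by (intro nn_integral_eq_integral AE_I2 order_trans[OF zero_le_power2]) auto
  also have "(\<integral>\<omega>. 2 * A \<omega> + 2 * L\<^sup>2 * D \<omega> + 2 * C \<omega> + E \<omega> \<partial>M)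
      = 2 * (\<integral>\<omega>. A \<omega> \<partial>M) + 2 * L\<^sup>2 * (\<integral>\<omega>. D \<omega> \<partial>M) + 2 * (\<integral>\<omega>. C \<omega> \<partial>M) + (\<integral>\<omega>. E \<omega> \<partial>M)"
    using A(1) D(1) C(1) E(1) by simp
  also have "ennreal \<dots> \<le> ennreal (step_bound q)"
    using A(2) D(2) C(2) E(2) unfolding step_bound_def by (intro ennreal_leI) simp
  finally show ?thesis .
qed


lemma avg_update_eq: "avg_update \<omega> = - (\<eta> *\<^sub>R (\<Sum>q<\<tau>. mom_alpha \<mu> \<tau> q *\<^sub>R (proj \<omega> *v avg_g q \<omega>)))"
proof -
  have "(\<Sum>i<N. theta i \<tau> \<omega> - th0) = - (\<eta> *\<^sub>R (\<Sum>q<\<tau>. mom_alpha \<mu> \<tau> q *\<^sub>R (proj \<omega> *v (\<Sum>i<N. g i q \<omega>))))"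
    by (simp add: theta_eq sum_negf scaleR_sum_right vec.sum sum.swap[of _ "{..<N}"])
  then show ?thesis
    unfolding matrix_vector_mult_scaleR by (simp add: scaleR_sum_right)
qed

lemma norm_avg_update_sq_le:
  "(norm (avg_update \<omega>))\<^sup>2 \<le> \<eta>\<^sup>2 * mom_S \<mu> \<tau> * (\<Sum>q<\<tau>. mom_alpha \<mu> \<tau> q * (norm (proj \<omega> *v avg_g q \<omega>))\<^sup>2)"
proof -
  have "(norm (\<Sum>q<\<tau>. mom_alpha \<mu> \<tau> q *\<^sub>R (proj \<omega> *v avg_g q \<omega>)))\<^sup>2
      \<le> mom_S \<mu> \<tau> * (\<Sum>q<\<tau>. mom_alpha \<mu> \<tau> q * (norm (proj \<omega> *v avg_g q \<omega>))\<^sup>2)"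
    unfolding mom_S_def by (intro norm_sum_scaleR_sq_le mom_alpha_nonneg mu_nonneg mu_less_1) auto
  then show ?thesis
    unfolding avg_update_eq by (simp add: power_mult_distrib mult.assoc mult_left_mono)
qed

lemma nn_integral_norm_avg_update_sq_le_weighted:
  assumes drift_int: "\<And>i s. i < N \<Longrightarrow> s < \<tau> \<Longrightarrow> integrable M (drift i s)"
  shows "(\<integral>\<^sup>+\<omega>. ennreal ((norm (avg_update \<omega>))\<^sup>2) \<partial>M)
    \<le> ennreal (\<eta>\<^sup>2 * mom_S \<mu> \<tau> * (\<Sum>q<\<tau>. mom_alpha \<mu> \<tau> q * step_bound q))"
proof -
  define c where "c q = \<eta>\<^sup>2 * mom_S \<mu> \<tau> * mom_alpha \<mu> \<tau> q" for q
  have c_nonneg: "0 \<le> c q" for q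
    unfolding c_def mom_S_def using mom_alpha_nonneg[OF mu_nonneg mu_less_1]
    by (intro mult_nonneg_nonneg sum_nonneg) auto
  have "(\<integral>\<^sup>+\<omega>. ennreal ((norm (avg_update \<omega>))\<^sup>2) \<partial>M)
      \<le> (\<integral>\<^sup>+\<omega>. (\<Sum>q<\<tau>. ennreal (c q) * ennreal ((norm (proj \<omega> *v avg_g q \<omega>))\<^sup>2)) \<partial>M)"
  proof (rule nn_integral_mono)
    fix \<omega>
    have "ennreal ((norm (avg_update \<omega>))\<^sup>2) \<le> ennreal (\<Sum>q<\<tau>. c q * (norm (proj \<omega> *v avg_g q \<omega>))\<^sup>2)"
      using norm_avg_update_sq_le[of \<omega>]
      by (intro ennreal_leI) (simp add: c_def sum_distrib_left mult.assoc)
    then show "ennreal ((norm (avg_update \<omega>))\<^sup>2)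
        \<le> (\<Sum>q<\<tau>. ennreal (c q) * ennreal ((norm (proj \<omega> *v avg_g q \<omega>))\<^sup>2))"
      using c_nonneg by (simp add: sum_ennreal[symmetric] ennreal_mult)
  qed
  also have "\<dots> = (\<Sum>q<\<tau>. \<integral>\<^sup>+\<omega>. ennreal (c q) * ennreal ((norm (proj \<omega> *v avg_g q \<omega>))\<^sup>2) \<partial>M)"
    using g_meas by (intro nn_integral_sum) (measurable, auto)
  also have "\<dots> = (\<Sum>q<\<tau>. ennreal (c q) * (\<integral>\<^sup>+\<omega>. ennreal ((norm (proj \<omega> *v avg_g q \<omega>))\<^sup>2) \<partial>M))"
    using g_meas by (intro sum.cong refl nn_integral_cmult) (measurable, auto)
  also have "\<dots> \<le> (\<Sum>q<\<tau>. ennreal (c q) * ennreal (step_bound q))"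
    using nn_integral_proj_avg_g_sq_le drift_int by (intro sum_mono mult_left_mono) auto
  also have "\<dots> = ennreal (\<Sum>q<\<tau>. c q * step_bound q)"
    using c_nonneg step_bound_nonneg by (simp add: sum_ennreal[symmetric] ennreal_mult)
  finally show ?thesis
    by (simp add: c_def sum_distrib_left mult.assoc)
qed

lemma weighted_sum_le_geometric_bound:
  assumes "\<And>q. 0 \<le> x q"
  shows "(\<Sum>q<\<tau>. mom_alpha \<mu> \<tau> q * x q) \<le> (\<Sum>q<\<tau>. x q) / (1 - \<mu>)"
proof -
  have "(\<Sum>q<\<tau>. mom_alpha \<mu> \<tau> q * x q) \<le> (\<Sum>q<\<tau>. 1 / (1 - \<mu>) * x q)"
    by (intro sum_mono mult_right_mono[OF mom_alpha_le[OF mu_nonneg mu_less_1] assms])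
  then show ?thesis by (simp add: sum_divide_distrib)
qed

lemma weighted_sum_step_bound_le:
  "(\<Sum>q<\<tau>. mom_alpha \<mu> \<tau> q * step_bound q)
    \<le> 2 * (real CARD('r) / real CARD('d) * mom_S \<mu> \<tau> * (norm (gradf th0))\<^sup>2 + mom_S \<mu> \<tau> * \<sigma>L\<^sup>2 / real N)
      + 2 * (L\<^sup>2 / (1 - \<mu>)) * ((1 / real N) * (\<Sum>i<N. \<Sum>s<\<tau>. \<integral>\<omega>. drift i s \<omega> \<partial>M))"
proof -
  define S where "S = mom_S \<mu> \<tau>"
  define G where "G = real CARD('r) / real CARD('d) * (norm (gradf th0))\<^sup>2"
  define e where "e q = (\<Sum>i<N. \<integral>\<omega>. drift i q \<omega> \<partial>M)" for q
  have S_nonneg: "0 \<le> S"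
    unfolding S_def mom_S_def using mom_alpha_nonneg[OF mu_nonneg mu_less_1] by (rule sum_nonneg)
  have "(\<Sum>q<\<tau>. mom_alpha \<mu> \<tau> q * step_bound q)
      = S * (2 * G + \<sigma>L\<^sup>2 / real N) + 2 * L\<^sup>2 * ((1 / real N) * (\<Sum>q<\<tau>. mom_alpha \<mu> \<tau> q * e q))"
    unfolding step_bound_def S_def mom_S_def G_def e_def
    by (simp add: sum.distrib sum_distrib_left sum_distrib_right sum_divide_distrib algebra_simps)
  also have "\<dots> \<le> 2 * (S * G + S * \<sigma>L\<^sup>2 / real N) + 2 * L\<^sup>2 * ((1 / real N) * ((\<Sum>q<\<tau>. e q) / (1 - \<mu>)))"
  proof -
    have "(\<Sum>q<\<tau>. mom_alpha \<mu> \<tau> q * e q) \<le> (\<Sum>q<\<tau>. e q) / (1 - \<mu>)"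
      unfolding e_def by (intro weighted_sum_le_geometric_bound sum_nonneg) auto
    then have "2 * L\<^sup>2 * ((1 / real N) * (\<Sum>q<\<tau>. mom_alpha \<mu> \<tau> q * e q))
        \<le> 2 * L\<^sup>2 * ((1 / real N) * ((\<Sum>q<\<tau>. e q) / (1 - \<mu>)))"
      by (intro mult_left_mono) auto
    moreover have "S * (2 * G + \<sigma>L\<^sup>2 / real N) \<le> 2 * (S * G + S * \<sigma>L\<^sup>2 / real N)"
      using mult_nonneg_nonneg[OF S_nonneg, of "\<sigma>L\<^sup>2 / real N"] by (simp add: distrib_left)
    ultimately show ?thesis by linarith
  qed
  also have "(\<Sum>q<\<tau>. e q) = (\<Sum>i<N. \<Sum>s<\<tau>. \<integral>\<omega>. drift i s \<omega> \<partial>M)"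
    unfolding e_def by (rule sum.swap)
  finally show ?thesis
    unfolding S_def G_def by (simp add: divide_inverse mult_ac)
qed

theorem nn_integral_norm_avg_update_sq_le:
  "(\<integral>\<^sup>+\<omega>. ennreal ((norm (avg_update \<omega>))\<^sup>2) \<partial>M)
    \<le> ennreal (2 * \<eta>\<^sup>2 * mom_S \<mu> \<tau> * (real CARD('r) / real CARD('d) * mom_S \<mu> \<tau> * (norm (gradf th0))\<^sup>2
        + mom_S \<mu> \<tau> * \<sigma>L\<^sup>2 / real N))
      + ennreal (2 * \<eta>\<^sup>2 * mom_S \<mu> \<tau> * (L\<^sup>2 / (1 - \<mu>)))
        * (ennreal (1 / real N) * (\<Sum>i<N. \<Sum>s<\<tau>. \<integral>\<^sup>+\<omega>. ennreal (drift i s \<omega>) \<partial>M))"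
  (is "_ \<le> ennreal ?a + ennreal ?b * (ennreal (1 / real N) * ?D)")
proof (cases "\<forall>i<N. \<forall>s<\<tau>. (\<integral>\<^sup>+\<omega>. ennreal (drift i s \<omega>) \<partial>M) < \<top>")
  case True
  then have drift_int: "integrable M (drift i s)" if "i < N" "s < \<tau>" for i s
    using that by (intro integrableI_bounded) auto
  define Y where "Y = (\<Sum>i<N. \<Sum>s<\<tau>. \<integral>\<omega>. drift i s \<omega> \<partial>M)"
  have Y_nonneg: "0 \<le> Y"
    unfolding Y_def by (simp add: sum_nonneg)
  have D_eq: "?D = ennreal Y"
    unfolding Y_def using drift_int by (simp add: nn_integral_eq_integral sum_ennreal sum_nonneg)
  have a_nonneg: "0 \<le> ?a" and b_nonneg: "0 \<le> ?b"
    using mom_S_pos[OF mu_nonneg mu_less_1 tau_pos] mu_less_1 by simp_all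
  have "(\<integral>\<^sup>+\<omega>. ennreal ((norm (avg_update \<omega>))\<^sup>2) \<partial>M) \<le> ennreal (?a + ?b * (1 / real N * Y))"
  proof -
    have "\<eta>\<^sup>2 * mom_S \<mu> \<tau> * (\<Sum>q<\<tau>. mom_alpha \<mu> \<tau> q * step_bound q) \<le> ?a + ?b * (1 / real N * Y)"
      using mult_left_mono[OF weighted_sum_step_bound_le, of "\<eta>\<^sup>2 * mom_S \<mu> \<tau>"]
        mom_S_pos[OF mu_nonneg mu_less_1 tau_pos]
      unfolding Y_def by (simp add: algebra_simps)
    then show ?thesis
      using nn_integral_norm_avg_update_sq_le_weighted[OF drift_int] by (auto intro: order_trans ennreal_leI)
  qed
  moreover have "ennreal ?b * (ennreal (1 / real N) * ennreal Y) = ennreal (?b * (1 / real N * Y))"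
    using b_nonneg Y_nonneg by (simp add: ennreal_mult[symmetric])
  moreover have "ennreal ?a + ennreal (?b * (1 / real N * Y)) = ennreal (?a + ?b * (1 / real N * Y))"
    using a_nonneg mult_nonneg_nonneg[OF b_nonneg, of "1 / real N * Y"] Y_nonneg
    by (intro ennreal_plus[symmetric]) simp_all
  ultimately show ?thesis
    unfolding D_eq by simp
next
  case False
  then have D_top: "?D = \<top>"
    by (auto simp: ennreal_sum_eq_top less_top[symmetric])
  have "ennreal ?b * (ennreal (1 / real N) * ?D) = \<top>"
    unfolding D_top using mom_S_pos[OF mu_nonneg mu_less_1 tau_pos] mu_less_1 eta_pos L_pos N_pos
    by (simp add: ennreal_mult_eq_top_iff)
  then show ?thesis
    by simp
qed

end

theorem mainTheorem8:
  fixes M :: "'a measure"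
    and P :: "'a \<Rightarrow> real^'r^'d"
    and g :: "nat \<Rightarrow> nat \<Rightarrow> 'a \<Rightarrow> real^'d"
    and F :: "nat \<Rightarrow> real^'d \<Rightarrow> real"
    and gradF :: "nat \<Rightarrow> real^'d \<Rightarrow> real^'d"
    and f :: "real^'d \<Rightarrow> real"
    and gradf :: "real^'d \<Rightarrow> real^'d"
    and th0 :: "real^'d"
    and N \<tau> :: nat and \<mu> \<eta> L \<sigma>L \<sigma>G :: real
  assumes N_pos: "N > 0" and tau_pos: "\<tau> > 0"
    and r_le_d: "CARD('r) \<le> CARD('d)"
    and mu: "0 \<le> \<mu>" "\<mu> < 1" and eta: "\<eta> > 0" and L: "L > 0"
    \<comment> \<open>f is the average of the F i, all differentiable\<close>
    and f_def: "\<And>x. f x = (1 / real N) * (\<Sum>i<N. F i x)"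
    and F_grad: "\<And>i x. i < N \<Longrightarrow> (F i has_derivative (\<lambda>h. gradF i x \<bullet> h)) (at x)"
    and f_grad: "\<And>x. (f has_derivative (\<lambda>h. gradf x \<bullet> h)) (at x)"
    \<comment> \<open>Assumption A1\<close>
    and f_bdd: "\<exists>fstar. \<forall>x. fstar \<le> f x"
    and f_smooth: "\<And>x y. norm (gradf x - gradf y) \<le> L * norm (x - y)"
    and F_smooth: "\<And>i x y. i < N \<Longrightarrow> norm (gradF i x - gradF i y) \<le> L * norm (x - y)"
    \<comment> \<open>Assumption A2 (heterogeneity)\<close>
    and hetero: "\<And>i x. i < N \<Longrightarrow> (norm (gradF i x - gradf x))\<^sup>2 \<le> \<sigma>G\<^sup>2"
    \<comment> \<open>the round's probability space, Haar projection\<close>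
    and prob: "prob_space M"
    and haar: "haar_stiefel M P"
    \<comment> \<open>Assumption A2 (stochastic gradients)\<close>
    and g_meas: "\<And>i s. i < N \<Longrightarrow> s < \<tau> \<Longrightarrow> g i s \<in> borel_measurable M"
    and g_int: "\<And>i s k. i < N \<Longrightarrow> s < \<tau> \<Longrightarrow> integrable M (\<lambda>\<omega>. g i s \<omega> $ k)"
    and unbiased: "\<And>i s k. i < N \<Longrightarrow> s < \<tau> \<Longrightarrow>
        AE \<omega> in M. real_cond_exp M (past_sa M N P g s) (\<lambda>\<omega>. g i s \<omega> $ k) \<omega>
                    = gradF i (client_theta \<eta> \<mu> th0 P g i s \<omega>) $ k"
    and variance: "\<And>i s. i < N \<Longrightarrow> s < \<tau> \<Longrightarrow>
        AE \<omega> in M. nn_cond_exp M (past_sa M N P g s)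
            (\<lambda>\<omega>. ennreal ((norm (g i s \<omega> - gradF i (client_theta \<eta> \<mu> th0 P g i s \<omega>)))\<^sup>2)) \<omega>
          \<le> ennreal (\<sigma>L\<^sup>2)"
    and cond_indep: "\<And>s (h :: nat \<Rightarrow> real^'d \<Rightarrow> real) B. s < \<tau> \<Longrightarrow>
        (\<And>i. h i \<in> borel_measurable borel) \<Longrightarrow> (\<And>i x. \<bar>h i x\<bar> \<le> B) \<Longrightarrow>
        AE \<omega> in M. real_cond_exp M (past_sa M N P g s) (\<lambda>\<omega>. \<Prod>i<N. h i (g i s \<omega>)) \<omega>
                    = (\<Prod>i<N. real_cond_exp M (past_sa M N P g s) (\<lambda>\<omega>. h i (g i s \<omega>)) \<omega>)"
  shows "(\<integral>\<^sup>+\<omega>. ennreal ((norm ((1 / real N) *\<^sub>R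
              (\<Sum>i<N. client_theta \<eta> \<mu> th0 P g i \<tau> \<omega> - th0)))\<^sup>2) \<partial>M)
         \<le> ennreal (2 * \<eta>\<^sup>2 * mom_S \<mu> \<tau> *
                (real CARD('r) / real CARD('d) * mom_S \<mu> \<tau> * (norm (gradf th0))\<^sup>2
                 + mom_S \<mu> \<tau> * \<sigma>L\<^sup>2 / real N))
           + ennreal (2 * \<eta>\<^sup>2 * mom_S \<mu> \<tau> * (L\<^sup>2 / (1 - \<mu>)))
             * (ennreal (1 / real N) *
                (\<Sum>i<N. \<Sum>s<\<tau>. \<integral>\<^sup>+\<omega>. ennreal ((norm (client_theta \<eta> \<mu> th0 P g i s \<omega> - th0))\<^sup>2) \<partial>M))"
proof -
  have gradf_eq: "gradf x = (1 / real N) *\<^sub>R (\<Sum>i<N. gradF i x)" for x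
    using f_def F_grad f_grad by (rule gradient_of_average)
  interpret fedslop_round M P g gradF gradf th0 N \<tau> \<mu> \<eta> L \<sigma>L
    by (rule fedslop_round.intro[OF prob fedslop_round_axioms.intro])
      (fact N_pos tau_pos mu eta L gradf_eq F_smooth haar g_meas unbiased variance cond_indep)+
  show ?thesis
    by (rule nn_integral_norm_avg_update_sq_le)
qed

end
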